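(* Let $a,n$ be positive integers and write $(1+y+\cdots+y^{a-1})^n=\sum_{k=0}^{n(a-1)}c_k\,y^k$. For $0\le i\le a-1$ and a polynomial $f$ of one variable of degree less than $n$, define \[\Sigma_i f(y)=\sum_{k\equiv i\ (\mathrm{mod}\ a)}c_k\,f(y-k).\] Then $\Sigma_i f(y)$ is independent of $i$, and hence \[\Sigma_i f(y)=\frac1a\,(1+S+\cdots+S^{a-1})^n f(y),\] where $S$ is the shift operator $(Sf)(y)=f(y-1)$. *)

theory Defs
  imports "HOL-Computational_Algebra.Polynomial"
begin

definition cc :: "nat \<Rightarrow> nat \<Rightarrow> nat \<Rightarrow> nat" where
  "cc a n k = coeff ((\<Sum>j<a. monom (1::nat) j) ^ n) k"

definition shift :: "'a::comm_ring_1 poly \<Rightarrow> 'a poly" where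
  "shift f = pcompose f [:-1, 1:]"

definition Sigma_op :: "nat \<Rightarrow> nat \<Rightarrow> nat \<Rightarrow> 'a::comm_ring_1 poly \<Rightarrow> 'a poly" where
  "Sigma_op a n i f = (\<Sum>k\<in>{k. k \<le> n * (a - 1) \<and> k mod a = i}.
      smult (of_nat (cc a n k)) (pcompose f [:- of_nat k, 1:]))"

definition shift_sum :: "nat \<Rightarrow> 'a::comm_ring_1 poly \<Rightarrow> 'a poly" where
  "shift_sum a f = (\<Sum>j<a. (shift ^^ j) f)"

end

theory Submission
  imports Defs
begin

text \<open>
  Let \<open>P = 1 + x + \<dots> + x\<^sup>a\<^sup>-\<^sup>1\<close> and write \<open>p(S) f\<close> for the action of a
  polynomial \<open>p\<close> in the shift operator. Then \<open>\<Sigma>\<^sub>i f = q\<^sub>i(S) f\<close>, where \<open>q\<^sub>i\<close> is the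
  section of \<open>P\<^sup>n\<close> made of the monomials of exponent \<open>\<equiv> i (mod a)\<close>. Since \<open>1 - S\<close>
  lowers the degree, \<open>(1 - S)\<^sup>n\<close> annihilates polynomials of degree \<open>< n\<close>; so it
  suffices that \<open>(1 - x)\<^sup>n\<close> divides \<open>a q\<^sub>i - P\<^sup>n\<close>. This follows by induction on
  \<open>n\<close>: the sections of \<open>P Q\<close> are \<open>\<Sum>\<^sub>t x\<^sup>t Q\<^sub>i\<^sub>-\<^sub>t\<close>, hence
  \<open>a (PQ)\<^sub>i - PQ = \<Sum>\<^sub>t (x\<^sup>t - 1)(a Q\<^sub>i\<^sub>-\<^sub>t - Q)\<close> (indices mod \<open>a\<close>), and \<open>1 - x\<close> divides
  every \<open>x\<^sup>t - 1\<close>.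
\<close>

lemma funpow_shift: "(shift ^^ k) f = f \<circ>\<^sub>p [:- of_nat k, 1:]"
  by (induction k) (simp_all add: shift_def pcompose_assoc[symmetric] pcompose_pCons algebra_simps)

lemma shift_smult: "shift (smult c f) = smult c (shift f)"
  by (simp add: shift_def pcompose_smult)

lemma shift_sum: "shift (sum g A) = (\<Sum>i\<in>A. shift (g i))"
  by (simp add: shift_def pcompose_sum)

lemma shift_uminus: "shift (- f) = - shift f"
  by (simp add: shift_def pcompose_uminus)

lemma smult_sum_right: "smult c (sum g A) = (\<Sum>i\<in>A. smult c (g i))"
  by (induction A rule: infinite_finite_induct) (simp_all add: smult_add_right)

lemma degree_diff_shift_less:
  fixes f :: "'a::idom poly"
  assumes "degree f > 0"
  shows "degree (f - shift f) < degree f"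
proof -
  have deg: "degree (shift f) = degree f"
    by (simp add: shift_def degree_pcompose)
  have lead: "lead_coeff (shift f) = lead_coeff f"
    by (simp add: shift_def lead_coeff_comp)
  have "degree (f - shift f) \<noteq> degree f"
  proof
    assume eq: "degree (f - shift f) = degree f"
    then have "f - shift f = 0"
      using deg lead by (metis coeff_diff diff_self leading_coeff_0_iff)
    then show False
      using eq assms by simp
  qed
  moreover have "degree (f - shift f) \<le> degree f"
    using degree_diff_le[of f "degree f" "shift f"] deg by simp
  ultimately show ?thesis
    by simp
qed

definition eval_shift :: "'a::comm_ring_1 poly \<Rightarrow> 'a poly \<Rightarrow> 'a poly" where
  "eval_shift p f = (\<Sum>k\<le>degree p. smult (coeff p k) ((shift ^^ k) f))"

lemma eval_shift_0 [simp]: "eval_shift 0 f = 0"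
  by (simp add: eval_shift_def)

lemma eval_shift_0_right [simp]: "eval_shift p 0 = 0"
  by (simp add: eval_shift_def funpow_shift)

lemma eval_shift_eq_sum:
  assumes "finite K" and "\<And>k. coeff p k \<noteq> 0 \<Longrightarrow> k \<in> K"
  shows "eval_shift p f = (\<Sum>k\<in>K. smult (coeff p k) ((shift ^^ k) f))"
proof -
  have outside: "coeff p k = 0" if "k \<notin> K" for k
    using assms(2) that by blast
  have "eval_shift p f = (\<Sum>k\<in>K \<union> {..degree p}. smult (coeff p k) ((shift ^^ k) f))"
    unfolding eval_shift_def
    by (rule sum.mono_neutral_left) (use assms in \<open>auto intro: le_degree\<close>)
  also have "\<dots> = (\<Sum>k\<in>K. smult (coeff p k) ((shift ^^ k) f))"
    by (rule sum.mono_neutral_right) (use assms(1) outside in auto)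
  finally show ?thesis .
qed

lemma eval_shift_add: "eval_shift (p + q) f = eval_shift p f + eval_shift q f"
proof -
  have "eval_shift r f = (\<Sum>k\<le>max (degree p) (degree q). smult (coeff r k) ((shift ^^ k) f))"
    if "r \<in> {p, q, p + q}" for r
    by (rule eval_shift_eq_sum) (use that in \<open>auto intro: le_degree simp: le_max_iff_disj not_le coeff_eq_0\<close>)
  then show ?thesis
    by (simp add: smult_add_left sum.distrib)
qed

lemma eval_shift_smult: "eval_shift (smult c p) f = smult c (eval_shift p f)"
proof -
  have "eval_shift (smult c p) f = (\<Sum>k\<le>degree p. smult (coeff (smult c p) k) ((shift ^^ k) f))"
    by (rule eval_shift_eq_sum) (auto intro: le_degree)
  then show ?thesis
    by (simp add: eval_shift_def smult_sum_right)
qed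

lemma eval_shift_diff: "eval_shift (p - q) f = eval_shift p f - eval_shift q f"
  by (metis eval_shift_add diff_add_cancel add_diff_cancel)

lemma eval_shift_sum: "eval_shift (sum g A) f = (\<Sum>i\<in>A. eval_shift (g i) f)"
  by (induction A rule: infinite_finite_induct) (simp_all add: eval_shift_add)

lemma eval_shift_add_right: "eval_shift p (f + g) = eval_shift p f + eval_shift p g"
  by (simp add: eval_shift_def funpow_shift pcompose_add smult_add_right sum.distrib)

lemma eval_shift_pCons: "eval_shift (pCons c p) f = smult c f + shift (eval_shift p f)"
proof -
  have "eval_shift (pCons c p) f =
      (\<Sum>k\<le>Suc (degree p). smult (coeff (pCons c p) k) ((shift ^^ k) f))"
    by (rule eval_shift_eq_sum) (auto simp: coeff_pCons split: nat.splits intro: le_degree)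
  also have "\<dots> = smult c f + (\<Sum>k\<le>degree p. smult (coeff p k) ((shift ^^ Suc k) f))"
    by (subst sum.atMost_Suc_shift) simp
  also have "\<dots> = smult c f + shift (eval_shift p f)"
    by (simp add: eval_shift_def shift_sum shift_smult)
  finally show ?thesis .
qed

lemma eval_shift_mult: "eval_shift (p * q) f = eval_shift p (eval_shift q f)"
proof (induction p)
  case 0
  then show ?case by simp
next
  case (pCons c p)
  then show ?case
    by (simp add: eval_shift_add eval_shift_smult eval_shift_pCons eval_shift_add_right)
qed

lemma eval_shift_monom: "eval_shift (monom 1 j) f = (shift ^^ j) f"
  by (subst eval_shift_eq_sum[where K = "{j}"]) (auto split: if_splits)

lemma eval_shift_1 [simp]: "eval_shift 1 f = f"
  using eval_shift_monom[of 0 f] by simp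

lemma eval_shift_one_minus_X: "eval_shift [:1, -1:] f = f - shift f"
  by (simp add: eval_shift_pCons shift_uminus eval_shift_def)

lemma eval_shift_one_minus_X_power:
  fixes f :: "'a::idom poly"
  assumes "degree f < n"
  shows "eval_shift ([:1, -1:] ^ n) f = 0"
  using assms
proof (induction n arbitrary: f)
  case 0
  then show ?case by simp
next
  case (Suc n)
  have "eval_shift ([:1, -1:] ^ Suc n) f = eval_shift ([:1, -1:] ^ n) (f - shift f)"
    by (simp only: power_Suc2 eval_shift_mult eval_shift_one_minus_X)
  also have "\<dots> = 0"
  proof (cases "degree f = 0")
    case True
    then have "f - shift f = 0"
      by (metis degree_eq_zeroE pcompose_const shift_def diff_self)
    then show ?thesis
      by simp
  next
    case False
    then show ?thesis
      using degree_diff_shift_less[of f] Suc by simp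
  qed
  finally show ?case .
qed

lemma eval_shift_eq_if_one_minus_X_power_dvd:
  fixes f :: "'a::idom poly"
  assumes "[:1, -1:] ^ n dvd p - q" and "degree f < n"
  shows "eval_shift p f = eval_shift q f"
proof -
  obtain e where "p - q = e * [:1, -1:] ^ n"
    using assms(1) by (metis dvdE mult.commute)
  then have "eval_shift p f - eval_shift q f = eval_shift e (eval_shift ([:1, -1:] ^ n) f)"
    by (simp add: eval_shift_diff[symmetric] eval_shift_mult)
  also have "\<dots> = 0"
    by (simp add: eval_shift_one_minus_X_power[OF assms(2)])
  finally show ?thesis
    by simp
qed

definition poly_section :: "nat \<Rightarrow> nat \<Rightarrow> 'a::comm_monoid_add poly \<Rightarrow> 'a poly" where
  "poly_section a i p = (\<Sum>k | k \<le> degree p \<and> k mod a = i mod a. monom (coeff p k) k)"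

lemma coeff_poly_section:
  "coeff (poly_section a i p) k = (if k mod a = i mod a then coeff p k else 0)"
proof -
  have "coeff (poly_section a i p) k =
      (\<Sum>j | j \<le> degree p \<and> j mod a = i mod a. if j = k then coeff p k else 0)"
    by (simp add: poly_section_def coeff_sum)
  also have "\<dots> = (if k mod a = i mod a then coeff p k else 0)"
    by (auto simp: coeff_eq_0)
  finally show ?thesis .
qed

lemma poly_section_add_modulus: "poly_section a (i + a) p = poly_section a i p"
  by (simp add: poly_section_def)

lemma poly_section_monom_mult:
  fixes q :: "'a::comm_semiring_1 poly"
  shows "poly_section a (j + t) (monom 1 t * q) = monom 1 t * poly_section a j q"
proof (rule poly_eqI)
  fix k
  show "coeff (poly_section a (j + t) (monom 1 t * q)) k = coeff (monom 1 t * poly_section a j q) k"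
  proof (cases "t \<le> k")
    case True
    then obtain m where "k = m + t"
      using le_Suc_ex by (metis add.commute)
    moreover have "(m + t) mod a = (j + t) mod a \<longleftrightarrow> m mod a = j mod a"
      by (simp add: nat_mod_eq_iff)
    ultimately show ?thesis
      by (simp add: coeff_poly_section coeff_monom_mult)
  next
    case False
    then show ?thesis
      by (simp add: coeff_poly_section coeff_monom_mult)
  qed
qed

lemma poly_section_sum: "poly_section a i (sum g A) = (\<Sum>x\<in>A. poly_section a i (g x))"
  by (rule poly_eqI) (simp add: coeff_poly_section coeff_sum)

lemma poly_section_sum_interval:
  assumes "a > 0"
  shows "(\<Sum>j\<in>{m..<m + a}. poly_section a j q) = q"
proof (induction m)
  case 0
  have "coeff (\<Sum>j<a. poly_section a j q) k = coeff q k" for k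
  proof -
    have "coeff (\<Sum>j<a. poly_section a j q) k = (\<Sum>j<a. if j = k mod a then coeff q k else 0)"
      by (auto simp: coeff_sum coeff_poly_section intro: sum.cong)
    also have "\<dots> = coeff q k"
      using assms by simp
    finally show ?thesis .
  qed
  then show ?case
    by (simp add: atLeast0LessThan poly_eqI)
next
  case (Suc m)
  have "(\<Sum>j\<in>{Suc m..<Suc m + a}. poly_section a j q) =
      (\<Sum>j\<in>{Suc m..<m + a}. poly_section a j q) + poly_section a (m + a) q"
    using assms by simp
  also have "\<dots> = poly_section a m q + (\<Sum>j\<in>{Suc m..<m + a}. poly_section a j q)"
    by (subst poly_section_add_modulus) (rule add.commute)
  also have "\<dots> = (\<Sum>j\<in>{m..<m + a}. poly_section a j q)"
    using assms by (simp add: sum.atLeast_Suc_lessThan)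
  finally show ?case
    using Suc by simp
qed

lemma poly_section_sum_reflected:
  assumes "a > 0"
  shows "(\<Sum>t<a. poly_section a (i + a - t) q) = q"
proof -
  have "(\<Sum>t<a. poly_section a (i + a - t) q) = (\<Sum>j\<in>{Suc i..<Suc i + a}. poly_section a j q)"
    by (rule sum.reindex_bij_witness[where i = "\<lambda>j. i + a - j" and j = "\<lambda>t. i + a - t"]) auto
  also have "\<dots> = q"
    using assms by (rule poly_section_sum_interval)
  finally show ?thesis .
qed

definition repunit_poly :: "nat \<Rightarrow> 'a::comm_semiring_1 poly" where
  "repunit_poly a = (\<Sum>j<a. monom 1 j)"

text \<open>The index \<open>i + a - t\<close> (with \<open>t < a\<close>) is \<open>i - t\<close> modulo \<open>a\<close>, written so that the
  natural-number subtraction does not truncate.\<close>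

lemma poly_section_repunit_mult:
  "poly_section a i (repunit_poly a * q) = (\<Sum>t<a. monom 1 t * poly_section a (i + a - t) q)"
proof -
  have "poly_section a i (monom 1 t * q) = monom 1 t * poly_section a (i + a - t) q" if "t < a" for t
    using poly_section_monom_mult[of a "i + a - t" t q] that by (simp add: poly_section_add_modulus)
  then show ?thesis
    by (simp add: repunit_poly_def sum_distrib_right poly_section_sum)
qed

lemma poly_section_defect_repunit_mult:
  fixes q :: "'a::comm_ring_1 poly"
  assumes "a > 0"
  defines "D \<equiv> \<lambda>j. smult (of_nat a) (poly_section a j q) - q"
  shows "smult (of_nat a) (poly_section a i (repunit_poly a * q)) - repunit_poly a * q =
    (\<Sum>t<a. (monom 1 t - 1) * D (i + a - t))"
proof -
  have "(\<Sum>t<a. D (i + a - t)) = smult (of_nat a) q - of_nat a * q"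
    by (simp add: D_def sum_subtractf smult_sum_right[symmetric] poly_section_sum_reflected[OF assms(1)])
  also have "\<dots> = 0"
    by (simp add: of_nat_poly)
  finally have "(\<Sum>t<a. D (i + a - t)) = 0" .
  then have "(\<Sum>t<a. (monom 1 t - 1) * D (i + a - t)) = (\<Sum>t<a. monom 1 t * D (i + a - t))"
    by (simp add: left_diff_distrib sum_subtractf)
  also have "\<dots> = smult (of_nat a) (poly_section a i (repunit_poly a * q)) - repunit_poly a * q"
    unfolding poly_section_repunit_mult
    by (simp add: D_def repunit_poly_def smult_sum_right right_diff_distrib sum_subtractf
        sum_distrib_right)
  finally show ?thesis ..
qed

lemma one_minus_X_dvd_monom_minus_one: "[:1, -1:] dvd (monom 1 t - 1 :: 'a::comm_ring_1 poly)"
proof -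
  have "[:-1, 1:] dvd (monom 1 t - 1 :: 'a poly)"
    by (simp add: poly_eq_0_iff_dvd[symmetric] poly_monom)
  moreover have "[:1, -1:] = - [:-1, 1::'a:]"
    by simp
  ultimately show ?thesis
    by (simp only: minus_dvd_iff)
qed

lemma one_minus_X_power_dvd_poly_section_defect:
  assumes "a > 0"
  shows "[:1, -1:] ^ n dvd
    smult (of_nat a) (poly_section a i (repunit_poly a ^ n)) - (repunit_poly a ^ n :: 'a::comm_ring_1 poly)"
proof (induction n arbitrary: i)
  case 0
  then show ?case by simp
next
  case (Suc n)
  have "[:1, -1:] ^ Suc n dvd
      (monom (1::'a) t - 1) * (smult (of_nat a) (poly_section a j (repunit_poly a ^ n)) - repunit_poly a ^ n)"
    for t j
    unfolding power_Suc by (intro mult_dvd_mono one_minus_X_dvd_monom_minus_one Suc.IH)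
  then show ?case
    unfolding power_Suc poly_section_defect_repunit_mult[OF assms] by (intro dvd_sum)
qed

lemma coeff_repunit_power: "coeff (repunit_poly a ^ n :: 'a::comm_semiring_1 poly) k = of_nat (cc a n k)"
proof (induction n arbitrary: k)
  case 0
  then show ?case
    by (simp add: cc_def)
next
  case (Suc n)
  have "coeff (repunit_poly a :: 'a poly) i = of_nat (coeff (\<Sum>j<a. monom (1::nat) j) i)" for i
    by (simp add: repunit_poly_def coeff_sum)
  then show ?case
    by (simp add: cc_def coeff_mult Suc[unfolded cc_def])
qed

lemma degree_repunit_power: "degree (repunit_poly a ^ n :: 'a::comm_semiring_1 poly) \<le> n * (a - 1)"
proof -
  have "degree (monom (1::'a) j) \<le> a - 1" if "j < a" for j
    using degree_monom_le[of "1::'a" j] that by linarith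
  then have "degree (repunit_poly a :: 'a poly) \<le> a - 1"
    unfolding repunit_poly_def by (intro degree_sum_le) auto
  then show ?thesis
    using degree_power_le[of "repunit_poly a :: 'a poly" n] by (simp add: mult.commute order_trans)
qed

lemma Sigma_op_eq_eval_shift:
  fixes f :: "'a::comm_ring_1 poly"
  assumes "i < a"
  shows "Sigma_op a n i f = eval_shift (poly_section a i (repunit_poly a ^ n)) f"
proof -
  let ?Q = "repunit_poly a ^ n :: 'a poly"
  let ?K = "{k. k \<le> n * (a - 1) \<and> k mod a = i}"
  have "eval_shift (poly_section a i ?Q) f =
      (\<Sum>k\<in>?K. smult (coeff (poly_section a i ?Q) k) ((shift ^^ k) f))"
  proof (rule eval_shift_eq_sum)
    fix k
    assume "coeff (poly_section a i ?Q) k \<noteq> 0"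
    then have "coeff ?Q k \<noteq> 0" and "k mod a = i"
      using assms by (simp_all add: coeff_poly_section split: if_splits)
    then show "k \<in> ?K"
      using order.trans[OF le_degree degree_repunit_power] by simp
  qed simp
  also have "\<dots> = Sigma_op a n i f"
    unfolding Sigma_op_def using assms
    by (intro sum.cong) (simp_all add: coeff_poly_section coeff_repunit_power funpow_shift)
  finally show ?thesis ..
qed

lemma funpow_shift_sum: "(shift_sum a ^^ n) f = eval_shift (repunit_poly a ^ n) f"
proof (induction n)
  case 0
  then show ?case
    by simp
next
  case (Suc n)
  then show ?case
    by (simp add: shift_sum_def repunit_poly_def eval_shift_mult eval_shift_sum eval_shift_monom)
qed

theorem lemma2p2:
  fixes a n :: nat and f :: "'a::field_char_0 poly"
  assumes "a > 0" and "n > 0" and "degree f < n"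
  shows "(\<forall>i<a. Sigma_op a n i f = Sigma_op a n 0 f) \<and>
         (\<forall>i<a. Sigma_op a n i f = smult (1 / of_nat a) ((shift_sum a ^^ n) f))"
proof -
  have "Sigma_op a n i f = smult (1 / of_nat a) ((shift_sum a ^^ n) f)" if "i < a" for i
  proof -
    have "eval_shift (smult (of_nat a) (poly_section a i (repunit_poly a ^ n))) f =
        eval_shift (repunit_poly a ^ n) f"
      using one_minus_X_power_dvd_poly_section_defect[OF assms(1)] assms(3)
      by (rule eval_shift_eq_if_one_minus_X_power_dvd)
    then have "smult (of_nat a) (Sigma_op a n i f) = (shift_sum a ^^ n) f"
      by (simp add: eval_shift_smult Sigma_op_eq_eval_shift[OF that] funpow_shift_sum)
    then have "smult (1 / of_nat a) ((shift_sum a ^^ n) f) =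
        smult (1 / of_nat a * of_nat a) (Sigma_op a n i f)"
      by (metis smult_smult)
    also have "\<dots> = Sigma_op a n i f"
      using assms(1) by simp
    finally show ?thesis ..
  qed
  then show ?thesis
    using assms(1) by simp
qed

end
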